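(* Consider a homogeneous weighted stochastic block model with two communities, each of size $n$: the vertex set $\{1,\dots,2n\}$ is partitioned into two communities of size $n$, and each pair $(i,j)$ independently receives a random weight $W_{(i,j)}$ with $W_{(i,j)}\sim p_n$ if $i,j$ lie in the same community and $W_{(i,j)}\sim q_n$ otherwise. Let $F$ be the event that the maximum likelihood estimator of the community assignment (based on observing all weights $W_{(i,j)}$) fails to coincide with the true partition. Then \[ \mathbb{P}(F)\le \sum_{k=1}^{n/2}\exp\Big(2k\Big(\log\frac{n}{k}+1\Big)-2k(n-k)I\Big), \] where the sum is over integers $1\le k\le n/2$ and $I$ is the Renyi divergence of order $\tfrac12$ between $p_n$ and $q_n$, namely $I=-2\log\int_{-\infty}^{\infty}\sqrt{p_n(x)q_n(x)}\,dx$ when $p_n,q_n$ are continuous distributions on $\mathbb{R}$ (with densities $p_n,q_n$), and $I=-2\log\sum_{\ell\ge 0}\sqrt{p_n(\ell)q_n(\ell)}$ when $p_n,q_n$ are discrete distributions on $\mathbb{N}$.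
   Context: The distributions $p_n$ (within-community) and $q_n$ (between-community) are arbitrary (both continuous on $\mathbb{R}$ or both discrete on $\mathbb{N}$); weights of distinct pairs are independent given the community assignment. *)

theory Defs
  imports "HOL-Probability.Probability"
begin

text \<open>Vertices are 0, ..., 2n-1. The true community assignment puts vertex i in
community True iff i < n. A community assignment is a predicate sigma on vertices.\<close>

definition pairs :: "nat \<Rightarrow> (nat \<times> nat) set" where
  "pairs n = {(i, j). i < j \<and> j < 2 * n}"

definition true_assign :: "nat \<Rightarrow> nat \<Rightarrow> bool" where
  "true_assign n = (\<lambda>i. i < n)"

definition balanced :: "nat \<Rightarrow> (nat \<Rightarrow> bool) \<Rightarrow> bool" where
  "balanced n \<sigma> = (card {i. i < 2 * n \<and> \<sigma> i} = n)"

definition same_partition :: "nat \<Rightarrow> (nat \<Rightarrow> bool) \<Rightarrow> (nat \<Rightarrow> bool) \<Rightarrow> bool" where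
  "same_partition n \<sigma> \<tau> = ((\<forall>i<2 * n. \<sigma> i = \<tau> i) \<or> (\<forall>i<2 * n. \<sigma> i \<noteq> \<tau> i))"

definition likelihood ::
  "nat \<Rightarrow> ('a \<Rightarrow> real) \<Rightarrow> ('a \<Rightarrow> real) \<Rightarrow> (nat \<Rightarrow> bool) \<Rightarrow> (nat \<times> nat \<Rightarrow> 'a) \<Rightarrow> real" where
  "likelihood n p q \<sigma> w =
     (\<Prod>e\<in>pairs n. if \<sigma> (fst e) = \<sigma> (snd e) then p (w e) else q (w e))"

definition is_density :: "'a measure \<Rightarrow> ('a \<Rightarrow> real) \<Rightarrow> bool" where
  "is_density \<mu> p =
     (p \<in> borel_measurable \<mu> \<and> (\<forall>x\<in>space \<mu>. 0 \<le> p x) \<and> (\<integral>\<^sup>+x. ennreal (p x) \<partial>\<mu>) = 1)"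

definition wsbm_measure ::
  "'a measure \<Rightarrow> nat \<Rightarrow> ('a \<Rightarrow> real) \<Rightarrow> ('a \<Rightarrow> real) \<Rightarrow> (nat \<times> nat \<Rightarrow> 'a) measure" where
  "wsbm_measure \<mu> n p q =
     (\<Pi>\<^sub>M e\<in>pairs n. density \<mu> (\<lambda>x. ennreal
        (if true_assign n (fst e) = true_assign n (snd e) then p x else q x)))"

text \<open>Failure event of the MLE: some balanced assignment inducing a different partition
has likelihood at least that of the truth (ties count as failure).\<close>
definition mle_failure ::
  "'a measure \<Rightarrow> nat \<Rightarrow> ('a \<Rightarrow> real) \<Rightarrow> ('a \<Rightarrow> real) \<Rightarrow> (nat \<times> nat \<Rightarrow> 'a) set" where
  "mle_failure \<mu> n p q =
     {w \<in> space (wsbm_measure \<mu> n p q). \<exists>\<sigma>. balanced n \<sigma> \<and>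
        \<not> same_partition n \<sigma> (true_assign n) \<and>
        likelihood n p q (true_assign n) w \<le> likelihood n p q \<sigma> w}"

definition renyi_half :: "'a measure \<Rightarrow> ('a \<Rightarrow> real) \<Rightarrow> ('a \<Rightarrow> real) \<Rightarrow> real" where
  "renyi_half \<mu> p q = - 2 * ln (\<integral>x. sqrt (p x * q x) \<partial>\<mu>)"

definition mle_bound :: "nat \<Rightarrow> real \<Rightarrow> real" where
  "mle_bound n I =
     (\<Sum>k = 1..n div 2. exp (2 * real k * (ln (real n / real k) + 1)
                              - 2 * real k * (real n - real k) * I))"

end

theory Submission
  imports Defs
begin

text \<open>The MLE fails only if some balanced assignment inducing another partition is at least as
likely as the truth. Up to relabelling, such an assignment moves \<open>k\<close> vertices of each community
into the other one, where \<open>1 \<le> k \<le> n/2\<close>, and there are \<open>(n choose k)\<^sup>2 \<le> exp (2k (log (n/k) + 1))\<close>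
choices. Moving a set \<open>X\<close> of vertices changes the law of exactly the pairs cut by \<open>X\<close>, of which
there are at least \<open>|X| (2n - |X|)\<close>. Bounding the indicator of a non-decreasing likelihood ratio
by its square root (a Chernoff bound of order 1/2) and integrating against the independent weights
gives probability at most \<open>B\<^bsup>|X| (2n - |X|)\<^esup>\<close>, where \<open>B = \<integral> \<surd>(p q) = exp (-I/2)\<close>. The union bound
over all \<open>k\<close> and all choices of moved vertices finishes the proof.\<close>

lemma power_div_fact_le_exp:
  fixes x :: real assumes "0 \<le> x" shows "x ^ k / fact k \<le> exp x"
proof -
  have s: "(\<lambda>n. x^n /\<^sub>R fact n) sums exp x" by (rule exp_converges)
  have nn: "\<And>n. 0 \<le> x^n /\<^sub>R fact n" using assms by simp
  have "x ^ k / fact k = x^k /\<^sub>R fact k" by (simp add: divide_inverse_commute)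
  also have "\<dots> \<le> (\<Sum>n<Suc k. x^n /\<^sub>R fact n)"
    by (rule member_le_sum) (use nn in auto)
  also have "\<dots> \<le> (\<Sum>n. x^n /\<^sub>R fact n)"
    by (rule sum_le_suminf[OF sums_summable[OF s]]) (use nn in auto)
  finally show ?thesis using sums_unique[OF s] by simp
qed

lemma binomial_le_exp:
  assumes "1 \<le> k" "k \<le> n"
  shows "real (n choose k) \<le> exp (real k * (ln (real n / real k) + 1))"
proof -
  have k: "real k > 0" and n: "real n > 0" using assms by simp_all
  have "real (n choose k) * fact k \<le> real n ^ k"
    using binomial_fact_pow[of n k] by (metis of_nat_fact of_nat_le_iff of_nat_mult of_nat_power)
  moreover have "real k ^ k \<le> exp (real k) * fact k"
    using power_div_fact_le_exp[of "real k" k] by (simp add: divide_le_eq)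
  ultimately have "real (n choose k) * real k ^ k \<le> exp (real k) * real n ^ k"
    by (smt (verit, best) mult.left_commute mult_left_mono of_nat_0_le_iff exp_gt_zero)
  then have "real (n choose k) \<le> exp (real k) * (real n / real k) ^ k"
    using k by (simp add: power_divide field_simps)
  also have "\<dots> = exp (real k * (ln (real n / real k) + 1))"
    using k n by (simp add: exp_add exp_of_nat_mult distrib_left mult.commute)
  finally show ?thesis .
qed

lemma power_le_exp_mult_ln:
  fixes b :: real assumes "0 \<le> b" shows "b ^ m \<le> exp (real m * ln b)"
proof (cases "b = 0")
  case False
  then show ?thesis using assms by (simp add: exp_of_nat_mult)
qed (cases m, simp_all)

lemma mult_sqrt_divide:
  fixes a b :: real assumes "0 \<le> a" shows "a * sqrt (b / a) = sqrt (a * b)"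
proof (cases "a = 0")
  case False
  have "sqrt (a * b) = sqrt (a\<^sup>2 * (b / a))" using False by (simp add: power2_eq_square)
  also have "\<dots> = sqrt (a\<^sup>2) * sqrt (b / a)" by (rule real_sqrt_mult)
  also have "\<dots> = a * sqrt (b / a)" using assms by simp
  finally show ?thesis by simp
qed simp

lemma one_le_prod_sqrt_ratio:
  fixes a b :: "'i \<Rightarrow> real"
  assumes "\<And>i. i \<in> I \<Longrightarrow> 0 < a i" "\<And>i. i \<in> I \<Longrightarrow> 0 \<le> b i" "prod a I \<le> prod b I"
  shows "1 \<le> (\<Prod>i\<in>I. sqrt (b i / a i))"
proof -
  have ratio: "0 \<le> b i / a i" if "i \<in> I" for i
    using assms(2)[OF that] assms(1)[OF that] by (rule divide_nonneg_pos)
  have "(\<Prod>i\<in>I. sqrt (b i / a i))\<^sup>2 = (\<Prod>i\<in>I. (sqrt (b i / a i))\<^sup>2)"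
    by (rule prod_power_distrib)
  also have "\<dots> = (\<Prod>i\<in>I. b i / a i)"
    using ratio by (intro prod.cong) simp_all
  also have "\<dots> = prod b I / prod a I" by (rule prod_dividef)
  also have "\<dots> \<ge> 1"
    using prod_pos[of I a] assms(1,3) by simp
  finally have "1\<^sup>2 \<le> (\<Prod>i\<in>I. sqrt (b i / a i))\<^sup>2" by simp
  moreover have "0 \<le> (\<Prod>i\<in>I. sqrt (b i / a i))"
    using ratio by (intro prod_nonneg) simp
  ultimately show ?thesis by (rule power2_le_imp_le)
qed

definition bhattacharyya :: "'a measure \<Rightarrow> ('a \<Rightarrow> real) \<Rightarrow> ('a \<Rightarrow> real) \<Rightarrow> ennreal" where
  "bhattacharyya \<mu> p q = (\<integral>\<^sup>+x. ennreal (sqrt (p x * q x)) \<partial>\<mu>)"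

lemma bhattacharyya_commute: "bhattacharyya \<mu> p q = bhattacharyya \<mu> q p"
  unfolding bhattacharyya_def by (simp only: mult.commute)

lemma bhattacharyya_self:
  assumes "is_density \<mu> p" shows "bhattacharyya \<mu> p p = 1"
proof -
  have "bhattacharyya \<mu> p p = (\<integral>\<^sup>+x. ennreal (p x) \<partial>\<mu>)"
    unfolding bhattacharyya_def
  proof (rule nn_integral_cong)
    fix x assume "x \<in> space \<mu>"
    then have "0 \<le> p x" using assms by (simp add: is_density_def)
    then show "ennreal (sqrt (p x * p x)) = ennreal (p x)" by simp
  qed
  then show ?thesis using assms by (simp add: is_density_def)
qed

lemma bhattacharyya_le_1:
  assumes p: "is_density \<mu> p" and q: "is_density \<mu> q"
  shows "bhattacharyya \<mu> p q \<le> 1"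
proof -
  have "bhattacharyya \<mu> p q \<le> (\<integral>\<^sup>+x. ennreal (1/2) * ennreal (p x) + ennreal (1/2) * ennreal (q x) \<partial>\<mu>)"
    unfolding bhattacharyya_def
  proof (rule nn_integral_mono)
    fix x assume "x \<in> space \<mu>"
    then have px: "0 \<le> p x" and qx: "0 \<le> q x" using p q by (auto simp: is_density_def)
    then have "sqrt (p x * q x) \<le> 1/2 * p x + 1/2 * q x"
      using arith_geo_mean_sqrt[OF px qx] by simp
    then have "ennreal (sqrt (p x * q x)) \<le> ennreal (1/2 * p x + 1/2 * q x)"
      by (rule ennreal_leI)
    also have "\<dots> = ennreal (1/2 * p x) + ennreal (1/2 * q x)"
      using px qx by (intro ennreal_plus) auto
    also have "\<dots> = ennreal (1/2) * ennreal (p x) + ennreal (1/2) * ennreal (q x)"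
      using px qx by (subst (1 2) ennreal_mult) auto
    finally show "ennreal (sqrt (p x * q x)) \<le> ennreal (1/2) * ennreal (p x) + ennreal (1/2) * ennreal (q x)" .
  qed
  also have "\<dots> = ennreal (1/2) + ennreal (1/2)"
    using p q unfolding is_density_def by (subst nn_integral_add) (auto simp: nn_integral_cmult)
  also have "\<dots> = 1" by (subst ennreal_plus[symmetric]) auto
  finally show ?thesis .
qed

lemma renyi_half_eq_bhattacharyya:
  assumes "is_density \<mu> p" "is_density \<mu> q"
  shows "renyi_half \<mu> p q = - 2 * ln (enn2real (bhattacharyya \<mu> p q))"
  using assms unfolding renyi_half_def bhattacharyya_def is_density_def
  by (subst integral_eq_nn_integral) auto

lemma prob_space_density_is_density:
  assumes "is_density \<mu> p" shows "prob_space (density \<mu> (\<lambda>x. ennreal (p x)))"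
proof (rule prob_spaceI)
  have "emeasure (density \<mu> (\<lambda>x. ennreal (p x))) (space \<mu>) = (\<integral>\<^sup>+x. ennreal (p x) \<partial>\<mu>)"
    using assms by (subst emeasure_density) (auto simp: is_density_def intro!: nn_integral_cong)
  then show "emeasure (density \<mu> (\<lambda>x. ennreal (p x))) (space (density \<mu> (\<lambda>x. ennreal (p x)))) = 1"
    using assms by (simp add: is_density_def)
qed

lemma sets_product_likelihood_le:
  fixes f g :: "'i \<Rightarrow> 'a \<Rightarrow> real"
  assumes "\<And>i. i \<in> I \<Longrightarrow> f i \<in> borel_measurable (M i)"
    and "\<And>i. i \<in> I \<Longrightarrow> g i \<in> borel_measurable (M i)"
  shows "{w \<in> space (Pi\<^sub>M I M). (\<Prod>i\<in>I. f i (w i)) \<le> (\<Prod>i\<in>I. g i (w i))} \<in> sets (Pi\<^sub>M I M)"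
proof -
  have "(\<lambda>w. f i (w i)) \<in> borel_measurable (Pi\<^sub>M I M)" "(\<lambda>w. g i (w i)) \<in> borel_measurable (Pi\<^sub>M I M)"
    if "i \<in> I" for i
    using assms[OF that] by (auto intro: measurable_compose[OF measurable_component_singleton[OF that]])
  then show ?thesis by (intro borel_measurable_le borel_measurable_prod) auto
qed

lemma AE_PiM_density_pos:
  assumes I: "finite I" and f: "\<And>i. is_density \<mu> (f i)"
  shows "AE w in \<Pi>\<^sub>M i\<in>I. density \<mu> (\<lambda>x. ennreal (f i x)). \<forall>i\<in>I. 0 < f i (w i)"
proof (rule AE_finite_allI[OF I])
  fix i assume "i \<in> I"
  have [measurable]: "f i \<in> borel_measurable \<mu>" using f[of i] by (simp add: is_density_def)
  have "AE x in density \<mu> (\<lambda>x. ennreal (f i x)). 0 < f i x" by (subst AE_density) auto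
  then show "AE w in \<Pi>\<^sub>M i\<in>I. density \<mu> (\<lambda>x. ennreal (f i x)). 0 < f i (w i)"
    by (rule AE_PiM_component[OF prob_space_density_is_density[OF f] \<open>i \<in> I\<close>])
qed

lemma nn_integral_density_sqrt_ratio:
  assumes f: "is_density \<mu> f" and g: "g \<in> borel_measurable \<mu>" "\<And>x. x \<in> space \<mu> \<Longrightarrow> 0 \<le> g x"
  shows "(\<integral>\<^sup>+x. ennreal (sqrt (g x / f x)) \<partial>density \<mu> (\<lambda>x. ennreal (f x))) = bhattacharyya \<mu> f g"
proof -
  have f_meas: "f \<in> borel_measurable \<mu>" and f_nonneg: "\<And>x. x \<in> space \<mu> \<Longrightarrow> 0 \<le> f x"
    using f by (auto simp: is_density_def)
  have "(\<integral>\<^sup>+x. ennreal (sqrt (g x / f x)) \<partial>density \<mu> (\<lambda>x. ennreal (f x)))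
        = (\<integral>\<^sup>+x. ennreal (f x) * ennreal (sqrt (g x / f x)) \<partial>\<mu>)"
    using f_meas g by (intro nn_integral_density) auto
  also have "\<dots> = bhattacharyya \<mu> f g"
    unfolding bhattacharyya_def using f_nonneg g(2)
    by (intro nn_integral_cong) (simp add: ennreal_mult[symmetric] mult_sqrt_divide)
  finally show ?thesis .
qed

text \<open>A Chernoff bound of order 1/2: on the event, the square root of the likelihood ratio is at
least 1, and its expectation factorises over the independent coordinates.\<close>

lemma emeasure_product_likelihood_le:
  fixes f g :: "'i \<Rightarrow> 'a \<Rightarrow> real"
  assumes I: "finite I"
    and f: "\<And>i. is_density \<mu> (f i)"
    and g_meas: "\<And>i. i \<in> I \<Longrightarrow> g i \<in> borel_measurable \<mu>"
    and g_nonneg: "\<And>i x. i \<in> I \<Longrightarrow> x \<in> space \<mu> \<Longrightarrow> 0 \<le> g i x"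
  defines "M \<equiv> \<Pi>\<^sub>M i\<in>I. density \<mu> (\<lambda>x. ennreal (f i x))"
  shows "emeasure M {w \<in> space M. (\<Prod>i\<in>I. f i (w i)) \<le> (\<Prod>i\<in>I. g i (w i))}
           \<le> (\<Prod>i\<in>I. bhattacharyya \<mu> (f i) (g i))"
proof -
  let ?E = "{w \<in> space M. (\<Prod>i\<in>I. f i (w i)) \<le> (\<Prod>i\<in>I. g i (w i))}"
  define h where "h i x = sqrt (g i x / f i x)" for i x
  have f_meas: "f i \<in> borel_measurable \<mu>" and f_nonneg: "x \<in> space \<mu> \<Longrightarrow> 0 \<le> f i x" for i x
    using f[of i] by (auto simp: is_density_def)
  have space: "w i \<in> space \<mu>" if "w \<in> space M" "i \<in> I" for w i
    using that by (auto simp: M_def space_PiM PiE_iff)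
  have h_nonneg: "0 \<le> h i x" if "i \<in> I" "x \<in> space \<mu>" for i x
    using f_nonneg[OF that(2)] g_nonneg[OF that] by (simp add: h_def)
  interpret product_prob_space "\<lambda>i. density \<mu> (\<lambda>x. ennreal (f i x))" I
    unfolding product_prob_space_def product_prob_space_axioms_def product_sigma_finite_def
    using prob_space_density_is_density[OF f] prob_space_imp_sigma_finite by blast
  have "AE w in M. \<forall>i\<in>I. 0 < f i (w i)"
    unfolding M_def by (rule AE_PiM_density_pos[of I \<mu> f, OF I f])
  then have ratio_bound: "AE w in M. indicator ?E w \<le> (\<Prod>i\<in>I. ennreal (h i (w i)))"
    using AE_space
  proof eventually_elim
    case (elim w)
    show ?case
    proof (cases "w \<in> ?E")
      case True
      then have "1 \<le> (\<Prod>i\<in>I. h i (w i))"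
        unfolding h_def using elim by (intro one_le_prod_sqrt_ratio) (auto intro: g_nonneg space)
      then show ?thesis
        using True elim by (simp add: prod_ennreal h_nonneg space)
    qed simp
  qed
  have "?E \<in> sets M"
    unfolding M_def using f_meas g_meas by (intro sets_product_likelihood_le) auto
  then have "emeasure M ?E = (\<integral>\<^sup>+w. indicator ?E w \<partial>M)" by simp
  also have "\<dots> \<le> (\<integral>\<^sup>+w. (\<Prod>i\<in>I. ennreal (h i (w i))) \<partial>M)"
    by (rule nn_integral_mono_AE[OF ratio_bound])
  also have "\<dots> = (\<Prod>i\<in>I. \<integral>\<^sup>+x. ennreal (h i x) \<partial>density \<mu> (\<lambda>x. ennreal (f i x)))"
    unfolding M_def using I f_meas g_meas by (intro product_nn_integral_prod) (auto simp: h_def)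
  also have "\<dots> = (\<Prod>i\<in>I. bhattacharyya \<mu> (f i) (g i))"
    unfolding h_def using f g_meas g_nonneg by (intro prod.cong refl nn_integral_density_sqrt_ratio) auto
  finally show ?thesis .
qed

definition edge_density :: "('a \<Rightarrow> real) \<Rightarrow> ('a \<Rightarrow> real) \<Rightarrow> (nat \<Rightarrow> bool) \<Rightarrow> nat \<times> nat \<Rightarrow> 'a \<Rightarrow> real"
  where "edge_density p q \<sigma> e = (if \<sigma> (fst e) = \<sigma> (snd e) then p else q)"

lemma likelihood_eq_prod_edge_density:
  "likelihood n p q \<sigma> w = (\<Prod>e\<in>pairs n. edge_density p q \<sigma> e (w e))"
  unfolding likelihood_def edge_density_def by (intro prod.cong) simp_all

lemma wsbm_measure_eq_PiM_edge_density:
  "wsbm_measure \<mu> n p q = (\<Pi>\<^sub>M e\<in>pairs n. density \<mu> (\<lambda>x. ennreal (edge_density p q (true_assign n) e x)))"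
  unfolding wsbm_measure_def edge_density_def by (intro PiM_cong arg_cong2[where f=density] ext) simp_all

lemma is_density_edge_density:
  "is_density \<mu> p \<Longrightarrow> is_density \<mu> q \<Longrightarrow> is_density \<mu> (edge_density p q \<sigma> e)"
  by (simp add: edge_density_def)

lemma bhattacharyya_edge_density:
  assumes "is_density \<mu> p" "is_density \<mu> q"
  shows "bhattacharyya \<mu> (edge_density p q \<tau> e) (edge_density p q \<sigma> e) =
           (if (\<tau> (fst e) = \<tau> (snd e)) = (\<sigma> (fst e) = \<sigma> (snd e)) then 1 else bhattacharyya \<mu> p q)"
  using assms by (auto simp: edge_density_def bhattacharyya_self bhattacharyya_commute)

lemma finite_pairs: "finite (pairs n)"
  by (rule finite_subset[of _ "{..<2*n} \<times> {..<2*n}"]) (auto simp: pairs_def)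

definition swap_assign :: "nat \<Rightarrow> nat set \<Rightarrow> nat \<Rightarrow> bool" where
  "swap_assign n X i = (true_assign n i \<noteq> (i \<in> X))"

definition cut_pairs :: "nat \<Rightarrow> nat set \<Rightarrow> (nat \<times> nat) set" where
  "cut_pairs n X = {e \<in> pairs n. (fst e \<in> X) \<noteq> (snd e \<in> X)}"

lemma emeasure_likelihood_swap_le:
  assumes p: "is_density \<mu> p" and q: "is_density \<mu> q"
  shows "emeasure (wsbm_measure \<mu> n p q)
           {w \<in> space (wsbm_measure \<mu> n p q).
              likelihood n p q (true_assign n) w \<le> likelihood n p q (swap_assign n X) w}
         \<le> bhattacharyya \<mu> p q ^ card (cut_pairs n X)"
proof -
  let ?d = "edge_density p q"
  have meas: "?d \<sigma> e \<in> borel_measurable \<mu>" and nonneg: "x \<in> space \<mu> \<Longrightarrow> 0 \<le> ?d \<sigma> e x" for \<sigma> e x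
    using is_density_edge_density[OF p q, of \<sigma> e] by (auto simp: is_density_def)
  have "emeasure (wsbm_measure \<mu> n p q)
           {w \<in> space (wsbm_measure \<mu> n p q).
              likelihood n p q (true_assign n) w \<le> likelihood n p q (swap_assign n X) w}
        \<le> (\<Prod>e\<in>pairs n. bhattacharyya \<mu> (?d (true_assign n) e) (?d (swap_assign n X) e))"
    unfolding wsbm_measure_eq_PiM_edge_density likelihood_eq_prod_edge_density
    by (rule emeasure_product_likelihood_le[OF finite_pairs is_density_edge_density[OF p q] meas nonneg])
  also have "\<dots> = (\<Prod>e\<in>pairs n. if e \<in> cut_pairs n X then bhattacharyya \<mu> p q else 1)"
    using p q
    by (intro prod.cong) (auto simp: bhattacharyya_edge_density cut_pairs_def swap_assign_def)
  also have "\<dots> = bhattacharyya \<mu> p q ^ card (cut_pairs n X)"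
  proof -
    have "pairs n \<inter> {e. e \<in> cut_pairs n X} = cut_pairs n X" by (auto simp: cut_pairs_def)
    then show ?thesis by (simp add: prod.If_cases[OF finite_pairs])
  qed
  finally show ?thesis .
qed

lemma card_cut_pairs_ge:
  assumes X: "X \<subseteq> {..<2*n}"
  shows "card X * (2*n - card X) \<le> card (cut_pairs n X)"
proof -
  let ?Y = "{..<2*n} - X"
  let ?f = "\<lambda>(x::nat, y::nat). (min x y, max x y)"
  have "inj_on ?f (X \<times> ?Y)"
    by (auto simp: inj_on_def min_def max_def split: if_splits)
  moreover have "?f ` (X \<times> ?Y) \<subseteq> cut_pairs n X"
  proof
    fix e assume "e \<in> ?f ` (X \<times> ?Y)"
    then obtain x y where e: "e = (min x y, max x y)" "x \<in> X" "y < 2*n" "y \<notin> X" by auto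
    then have "x < 2*n" "x \<noteq> y" using X by auto
    then show "e \<in> cut_pairs n X"
      using e unfolding cut_pairs_def pairs_def by (cases "x < y") auto
  qed
  moreover have "finite (cut_pairs n X)"
    by (rule finite_subset[OF _ finite_pairs[of n]]) (auto simp: cut_pairs_def)
  ultimately have "card (X \<times> ?Y) \<le> card (cut_pairs n X)"
    by (rule card_inj_on_le)
  moreover have "card ?Y = 2*n - card X"
    using X by (simp add: card_Diff_subset finite_subset)
  ultimately show ?thesis by (simp add: card_cartesian_product)
qed

lemma prob_space_wsbm_measure:
  "is_density \<mu> p \<Longrightarrow> is_density \<mu> q \<Longrightarrow> prob_space (wsbm_measure \<mu> n p q)"
  unfolding wsbm_measure_eq_PiM_edge_density
  by (intro prob_space_PiM prob_space_density_is_density is_density_edge_density)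

lemma measure_likelihood_swap_le:
  assumes p: "is_density \<mu> p" and q: "is_density \<mu> q" and X: "X \<subseteq> {..<2*n}"
  shows "measure (wsbm_measure \<mu> n p q)
           {w \<in> space (wsbm_measure \<mu> n p q).
              likelihood n p q (true_assign n) w \<le> likelihood n p q (swap_assign n X) w}
         \<le> exp (- real (card X * (2*n - card X)) / 2 * renyi_half \<mu> p q)"
    (is "measure ?W ?E \<le> _")
proof -
  interpret prob_space ?W using prob_space_wsbm_measure[OF p q] .
  define B where "B = enn2real (bhattacharyya \<mu> p q)"
  have B_le: "bhattacharyya \<mu> p q \<le> 1" by (rule bhattacharyya_le_1[OF p q])
  then have B: "bhattacharyya \<mu> p q = ennreal B" "0 \<le> B" "B \<le> 1"
    by (auto simp: B_def ennreal_enn2real_if top_unique enn2real_leI)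
  have "ennreal (measure ?W ?E) \<le> ennreal (B ^ card (cut_pairs n X))"
    using emeasure_likelihood_swap_le[OF p q, of n X] B by (simp add: emeasure_eq_measure ennreal_power)
  then have "measure ?W ?E \<le> B ^ card (cut_pairs n X)"
    using B by (simp add: ennreal_le_iff)
  also have "\<dots> \<le> B ^ (card X * (2*n - card X))"
    using B card_cut_pairs_ge[OF X] by (intro power_decreasing) auto
  also have "\<dots> \<le> exp (real (card X * (2*n - card X)) * ln B)"
    using B by (intro power_le_exp_mult_ln) auto
  also have "\<dots> = exp (- real (card X * (2*n - card X)) / 2 * renyi_half \<mu> p q)"
    by (simp add: renyi_half_eq_bhattacharyya[OF p q] B_def)
  finally show ?thesis .
qed

lemma likelihood_cong_same_partition:
  assumes "same_partition n \<sigma> \<tau>"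
  shows "likelihood n p q \<sigma> w = likelihood n p q \<tau> w"
  unfolding likelihood_def
proof (rule prod.cong[OF refl])
  fix e assume "e \<in> pairs n"
  then have "fst e < 2*n" "snd e < 2*n" by (auto simp: pairs_def)
  then have "(\<sigma> (fst e) = \<sigma> (snd e)) = (\<tau> (fst e) = \<tau> (snd e))"
    using assms by (auto simp: same_partition_def)
  then show "(if \<sigma> (fst e) = \<sigma> (snd e) then p (w e) else q (w e)) =
             (if \<tau> (fst e) = \<tau> (snd e) then p (w e) else q (w e))" by simp
qed

lemma same_partition_trans:
  "same_partition n \<sigma> \<tau> \<Longrightarrow> same_partition n \<tau> \<rho> \<Longrightarrow> same_partition n \<sigma> \<rho>"
  unfolding same_partition_def by (metis (full_types))

lemma swap_assign_empty: "swap_assign n {} = true_assign n"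
  by (simp add: swap_assign_def fun_eq_iff)

lemma same_partition_swap_complement:
  assumes "S \<subseteq> {..<n}" "T \<subseteq> {n..<2*n}"
  shows "same_partition n (swap_assign n (S \<union> T)) (swap_assign n (({..<n} - S) \<union> ({n..<2*n} - T)))"
  using assms by (auto simp: same_partition_def swap_assign_def true_assign_def)

lemma balanced_same_partition_swap:
  assumes "balanced n \<sigma>"
  obtains S T where "S \<subseteq> {..<n}" "T \<subseteq> {n..<2*n}" "card T = card S"
    "same_partition n \<sigma> (swap_assign n (S \<union> T))"
proof
  define S where "S = {i. i < n \<and> \<not> \<sigma> i}"
  define T where "T = {i. n \<le> i \<and> i < 2*n \<and> \<sigma> i}"
  show S: "S \<subseteq> {..<n}" and T: "T \<subseteq> {n..<2*n}" by (auto simp: S_def T_def)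
  then have fin: "finite S" "finite T" by (auto intro: finite_subset)
  have "{i. i < 2*n \<and> \<sigma> i} = ({..<n} - S) \<union> T" "({..<n} - S) \<inter> T = {}"
    by (auto simp: S_def T_def)
  then have "card {i. i < 2*n \<and> \<sigma> i} = (n - card S) + card T"
    using S fin by (simp add: card_Un_disjoint card_Diff_subset)
  moreover have "card S \<le> n" using card_mono[OF _ S] by simp
  ultimately show "card T = card S" using assms by (simp add: balanced_def)
  show "same_partition n \<sigma> (swap_assign n (S \<union> T))"
    by (auto simp: same_partition_def swap_assign_def true_assign_def S_def T_def)
qed

definition swap_sets :: "nat \<Rightarrow> nat \<Rightarrow> (nat set \<times> nat set) set" where
  "swap_sets n k = {S. S \<subseteq> {..<n} \<and> card S = k} \<times> {T. T \<subseteq> {n..<2*n} \<and> card T = k}"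

lemma finite_swap_sets: "finite (swap_sets n k)"
  unfolding swap_sets_def by auto

lemma card_swap_sets: "card (swap_sets n k) = (n choose k)\<^sup>2"
  using n_subsets[of "{..<n}" k] n_subsets[of "{n..<2*n}" k]
  by (simp add: swap_sets_def card_cartesian_product power2_eq_square)

lemma swap_sets_union:
  assumes "(S, T) \<in> swap_sets n k"
  shows "S \<union> T \<subseteq> {..<2*n}" "card (S \<union> T) = 2 * k"
proof -
  have ST: "S \<subseteq> {..<n}" "T \<subseteq> {n..<2*n}" "card S = k" "card T = k"
    using assms by (auto simp: swap_sets_def)
  then show "S \<union> T \<subseteq> {..<2*n}" by auto
  have "S \<inter> T = {}" using ST(1,2) by force
  moreover have "finite S" "finite T" using ST(1,2) by (auto intro: finite_subset)
  ultimately show "card (S \<union> T) = 2 * k" using ST by (simp add: card_Un_disjoint)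
qed

lemma misclassification_swap_sets:
  assumes bal: "balanced n \<sigma>" and wrong: "\<not> same_partition n \<sigma> (true_assign n)"
  obtains k S T where "k \<in> {1..n div 2}" "(S, T) \<in> swap_sets n k"
    "same_partition n \<sigma> (swap_assign n (S \<union> T))"
proof -
  have nonempty: "card A \<noteq> 0"
    if "A \<subseteq> {..<n}" "B \<subseteq> {n..<2*n}" "card B = card A" "same_partition n \<sigma> (swap_assign n (A \<union> B))"
    for A B
  proof
    assume "card A = 0"
    then have "A \<union> B = {}" using that(1-3) by (auto dest: finite_subset)
    then show False using that(4) wrong by (simp add: swap_assign_empty)
  qed
  obtain S T where S: "S \<subseteq> {..<n}" and T: "T \<subseteq> {n..<2*n}" and card: "card T = card S"
    and \<sigma>: "same_partition n \<sigma> (swap_assign n (S \<union> T))"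
    using bal by (rule balanced_same_partition_swap)
  define S' where "S' = {..<n} - S"
  define T' where "T' = {n..<2*n} - T"
  have S': "S' \<subseteq> {..<n}" "card S' = n - card S" and T': "T' \<subseteq> {n..<2*n}" "card T' = n - card S"
    using S T card finite_subset[OF S] finite_subset[OF T] by (auto simp: S'_def T'_def card_Diff_subset)
  have \<sigma>': "same_partition n \<sigma> (swap_assign n (S' \<union> T'))"
    using same_partition_trans[OF \<sigma> same_partition_swap_complement[OF S T]] by (simp add: S'_def T'_def)
  have "card S \<noteq> 0" "n - card S \<noteq> 0"
    using nonempty[OF S T card \<sigma>] nonempty[OF S'(1) T'(1) _ \<sigma>'] S'(2) T'(2) by auto
  show ?thesis
  proof (cases "card S \<le> n div 2")
    case True
    then show ?thesis
      using that[of "card S" S T] \<open>card S \<noteq> 0\<close> S T card \<sigma> by (auto simp: swap_sets_def)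
  next
    case False
    then show ?thesis
      using that[of "n - card S" S' T'] \<open>n - card S \<noteq> 0\<close> S' T' \<sigma>' by (auto simp: swap_sets_def)
  qed
qed

lemma sets_likelihood_le:
  assumes "is_density \<mu> p" "is_density \<mu> q"
  shows "{w \<in> space (wsbm_measure \<mu> n p q). likelihood n p q \<sigma> w \<le> likelihood n p q \<tau> w}
           \<in> sets (wsbm_measure \<mu> n p q)"
  unfolding wsbm_measure_eq_PiM_edge_density likelihood_eq_prod_edge_density
  using is_density_edge_density[OF assms]
  by (intro sets_product_likelihood_le) (simp_all add: is_density_def)

lemma binomial_sq_mult_exp_le:
  assumes "1 \<le> k" "k \<le> n"
  shows "real ((n choose k)\<^sup>2) * exp (- 2 * real k * (real n - real k) * I)
           \<le> exp (2 * real k * (ln (real n / real k) + 1) - 2 * real k * (real n - real k) * I)"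
proof -
  have "real ((n choose k)\<^sup>2) \<le> (exp (real k * (ln (real n / real k) + 1)))\<^sup>2"
    using binomial_le_exp[OF assms] by (simp add: power_mono)
  also have "\<dots> = exp (2 * real k * (ln (real n / real k) + 1))"
    by (simp add: exp_of_nat_mult[symmetric] mult.assoc)
  finally show ?thesis by (simp add: exp_diff divide_inverse exp_minus)
qed

lemma measure_likelihood_swap_sets_le:
  assumes p: "is_density \<mu> p" and q: "is_density \<mu> q" and ST: "(S, T) \<in> swap_sets n k"
  shows "measure (wsbm_measure \<mu> n p q)
           {w \<in> space (wsbm_measure \<mu> n p q).
              likelihood n p q (true_assign n) w \<le> likelihood n p q (swap_assign n (S \<union> T)) w}
         \<le> exp (- 2 * real k * (real n - real k) * renyi_half \<mu> p q)"
proof -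
  note X = swap_sets_union[OF ST]
  have "k \<le> n" using ST card_mono[of "{..<n}" S] by (auto simp: swap_sets_def)
  then have exponent: "- real (card (S \<union> T) * (2*n - card (S \<union> T))) / 2 = - 2 * real k * (real n - real k)"
    unfolding X(2) by (simp add: of_nat_diff field_simps)
  from measure_likelihood_swap_le[OF p q X(1)] show ?thesis unfolding exponent .
qed

lemma mle_failure_subset_swap_events:
  "mle_failure \<mu> n p q \<subseteq> (\<Union>k\<in>{1..n div 2}. \<Union>(S, T)\<in>swap_sets n k.
     {w \<in> space (wsbm_measure \<mu> n p q).
        likelihood n p q (true_assign n) w \<le> likelihood n p q (swap_assign n (S \<union> T)) w})"
proof
  fix w assume "w \<in> mle_failure \<mu> n p q"
  then obtain \<sigma> where w: "w \<in> space (wsbm_measure \<mu> n p q)" and bal: "balanced n \<sigma>"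
    and wrong: "\<not> same_partition n \<sigma> (true_assign n)"
    and le: "likelihood n p q (true_assign n) w \<le> likelihood n p q \<sigma> w"
    unfolding mle_failure_def by auto
  obtain k S T where k: "k \<in> {1..n div 2}" and ST: "(S, T) \<in> swap_sets n k"
    and "same_partition n \<sigma> (swap_assign n (S \<union> T))"
    using bal wrong by (rule misclassification_swap_sets)
  then have "likelihood n p q \<sigma> w = likelihood n p q (swap_assign n (S \<union> T)) w"
    by (intro likelihood_cong_same_partition)
  then show "w \<in> (\<Union>k\<in>{1..n div 2}. \<Union>(S, T)\<in>swap_sets n k.
     {w \<in> space (wsbm_measure \<mu> n p q).
        likelihood n p q (true_assign n) w \<le> likelihood n p q (swap_assign n (S \<union> T)) w})"
    using w le k ST by force
qed

lemma measure_mle_failure_le: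
  assumes p: "is_density \<mu> p" and q: "is_density \<mu> q"
  shows "measure (wsbm_measure \<mu> n p q) (mle_failure \<mu> n p q) \<le> mle_bound n (renyi_half \<mu> p q)"
proof -
  let ?W = "wsbm_measure \<mu> n p q"
  let ?E = "\<lambda>(S, T). {w \<in> space ?W.
     likelihood n p q (true_assign n) w \<le> likelihood n p q (swap_assign n (S \<union> T)) w}"
  interpret prob_space ?W using prob_space_wsbm_measure[OF p q] .
  have E_sets: "?E ST \<in> sets ?W" for ST using sets_likelihood_le[OF p q] by (simp split: prod.split)
  then have U_sets: "(\<Union>ST\<in>swap_sets n k. ?E ST) \<in> sets ?W" for k using finite_swap_sets by blast
  have "measure ?W (mle_failure \<mu> n p q) \<le> measure ?W (\<Union>k\<in>{1..n div 2}. \<Union>ST\<in>swap_sets n k. ?E ST)"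
    by (rule finite_measure_mono[OF mle_failure_subset_swap_events]) (use U_sets in blast)
  also have "\<dots> \<le> (\<Sum>k=1..n div 2. \<Sum>ST\<in>swap_sets n k. measure ?W (?E ST))"
    using finite_swap_sets E_sets U_sets
    by (intro order.trans[OF measure_UNION_le] sum_mono measure_UNION_le) auto
  also have "\<dots> \<le> (\<Sum>k=1..n div 2. real (card (swap_sets n k))
                       * exp (- 2 * real k * (real n - real k) * renyi_half \<mu> p q))"
    using measure_likelihood_swap_sets_le[OF p q]
    by (intro sum_mono order.trans[OF sum_mono sum_constant[THEN eq_refl]]) (auto split: prod.split)
  also have "\<dots> \<le> mle_bound n (renyi_half \<mu> p q)"
    unfolding mle_bound_def card_swap_sets using binomial_sq_mult_exp_le by (intro sum_mono) auto
  finally show ?thesis .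
qed

theorem theorem1:
  shows "(\<forall>(n::nat) (p::real \<Rightarrow> real) q.
            is_density lborel p \<and> is_density lborel q \<longrightarrow>
            measure (wsbm_measure lborel n p q) (mle_failure lborel n p q)
              \<le> mle_bound n (renyi_half lborel p q))
       \<and> (\<forall>(n::nat) (p::nat \<Rightarrow> real) q.
            is_density (count_space UNIV) p \<and> is_density (count_space UNIV) q \<longrightarrow>
            measure (wsbm_measure (count_space UNIV) n p q) (mle_failure (count_space UNIV) n p q)
              \<le> mle_bound n (renyi_half (count_space UNIV) p q))"
  by (auto intro: measure_mle_failure_le)

end
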